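(* Let $c,d$ be positive integers, $\alpha,\delta\in(0,1]$, and $C_0\subseteq\mathbb{F}_2^d$ a linear code with minimum distance $d_0$, all constants, with $d_0\delta>2$; let $\varepsilon_0=\frac{d_0}{2}-\frac1\delta>0$. Let $G=(L\cup R,E)$ be a $(c,d,\alpha,\delta)$-bipartite expander with $L=[n]$, let $x\in\mathbb{F}_2^n$ and $y\in T(G,C_0)$ with $d_H(x,y)\le\alpha n$. Consider the algorithm $\mathsf{RandDecode}$ which, on input $x$, repeatedly replaces $x$ by $\mathsf{RandFlip}(x)$ as long as $U(x)\neq\emptyset$, and then returns $x$. Then, on input $x$, $\mathsf{RandDecode}$ outputs $y$ in $O(n)$ time with probability $1-o(1)$.
   Context: Binary linear codes; $d_H$ Hamming distance. A bipartite graph $G=(L\cup R,E)$ is $(c,d)$-regular if left vertices have degree $c$ and right vertices degree $d$; $N(S)$ denotes the neighborhood of a vertex set $S$. A $(c,d,\alpha,\delta)$-bipartite expander is a $(c,d)$-regular bipartite graph with $|N(S)|\ge\delta c|S|$ for all $S\subseteq L$, $|S|\le\alpha|L|$. Tanner code: $L=[n]$; for each $v\in R$ a fixed ordering of $N(v)$ gives $x_{N(v)}\in\mathbb{F}_2^d$ (restriction of $x$ to $N(v)$); $T(G,C_0)=\{x\in\mathbb{F}_2^n: x_{N(v)}\in C_0\ \forall v\in R\}$. $U(x)=\{v\in R: x_{N(v)}\notin C_0\}$ (unsatisfied checks). For $z\in\mathbb{F}_2^d$, $\mathsf{Decode}(z)$ is the codeword of $C_0$ closest to $z$ in Hamming distance,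 ties broken by the lexicographically smallest. $\mathsf{RandFlip}(x)$: set $t=d_0/2$ and $p_1=\dots=p_n=0$; for each $v\in R$, let $w_v=\mathsf{Decode}(x_{N(v)})$; if $1\le d_H(w_v,x_{N(v)})<t$, let $i$ be the smallest element of $N(v)$ at which $w_v$ and $x_{N(v)}$ differ and increase $p_i$ by $\frac{t-d_H(w_v,x_{N(v)})}{ct}$. Then flip each $x_i$ independently with probability $p_i$ and return the result. The parameters $c,d,\alpha,\delta,C_0$ are constants, $n$ grows, and $o(1)$, $O(n)$ are with respect to $n$. Running time is in the RAM model with adjacency lists, with the implementation in which $U(x)$ and the values $p_i$ are maintained in data structures (initialized once in $O(n)$ time) allowing $U(x)$ to be enumerated in $O(|U(x)|)$ time and updated in $O(1)$ time per bit flip, so that only unsatisfied checks and indices with $p_i\neq0$ are enumerated. *)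

theory Defs
  imports "HOL-Probability.Probability"
begin

(* Binary words of length d are bool lists (False = 0, True = 1).
   Words in F_2^n are functions nat => bool, only the coordinates in {..<n} matter. *)

definition hdist :: "bool list \<Rightarrow> bool list \<Rightarrow> nat" where
  "hdist u w = card {j. j < length u \<and> u ! j \<noteq> w ! j}"

definition hdist_n :: "nat \<Rightarrow> (nat \<Rightarrow> bool) \<Rightarrow> (nat \<Rightarrow> bool) \<Rightarrow> nat" where
  "hdist_n n x y = card {i. i < n \<and> x i \<noteq> y i}"

definition linear_code :: "nat \<Rightarrow> bool list set \<Rightarrow> bool" where
  "linear_code d C0 \<longleftrightarrow> C0 \<subseteq> {w. length w = d} \<and> replicate d False \<in> C0 \<and>
     (\<forall>u\<in>C0. \<forall>w\<in>C0. map2 (\<noteq>) u w \<in> C0)"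

definition min_distance :: "bool list set \<Rightarrow> nat \<Rightarrow> bool" where
  "min_distance C0 d0 \<longleftrightarrow>
     (\<exists>u\<in>C0. \<exists>w\<in>C0. u \<noteq> w \<and> hdist u w = d0) \<and>
     (\<forall>u\<in>C0. \<forall>w\<in>C0. u \<noteq> w \<longrightarrow> d0 \<le> hdist u w)"

definition lex_le :: "bool list \<Rightarrow> bool list \<Rightarrow> bool" where
  "lex_le u w \<longleftrightarrow> u = w \<or> (u, w) \<in> lexord {(False, True)}"

definition decode :: "bool list set \<Rightarrow> bool list \<Rightarrow> bool list" where
  "decode C0 z = (THE w. w \<in> C0 \<and>
     (\<forall>u\<in>C0. hdist w z < hdist u z \<or> (hdist w z = hdist u z \<and> lex_le w u)))"

(* Bipartite graph: L = {..<n}, right vertices R :: nat set,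
   nb v = the fixed ordering of N(v) for v in R. *)
definition biregular :: "nat \<Rightarrow> nat set \<Rightarrow> (nat \<Rightarrow> nat list) \<Rightarrow> nat \<Rightarrow> nat \<Rightarrow> bool" where
  "biregular n R nb c d \<longleftrightarrow> finite R \<and>
     (\<forall>v\<in>R. length (nb v) = d \<and> distinct (nb v) \<and> set (nb v) \<subseteq> {..<n}) \<and>
     (\<forall>i<n. card {v\<in>R. i \<in> set (nb v)} = c)"

definition nbhd :: "nat set \<Rightarrow> (nat \<Rightarrow> nat list) \<Rightarrow> nat set \<Rightarrow> nat set" where
  "nbhd R nb S = {v\<in>R. set (nb v) \<inter> S \<noteq> {}}"

definition bip_expander ::
  "nat \<Rightarrow> nat set \<Rightarrow> (nat \<Rightarrow> nat list) \<Rightarrow> nat \<Rightarrow> nat \<Rightarrow> real \<Rightarrow> real \<Rightarrow> bool" where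
  "bip_expander n R nb c d \<alpha> \<delta> \<longleftrightarrow> biregular n R nb c d \<and>
     (\<forall>S. S \<subseteq> {..<n} \<and> real (card S) \<le> \<alpha> * real n \<longrightarrow>
        real (card (nbhd R nb S)) \<ge> \<delta> * real c * real (card S))"

definition tanner :: "nat set \<Rightarrow> (nat \<Rightarrow> nat list) \<Rightarrow> bool list set \<Rightarrow> (nat \<Rightarrow> bool) set" where
  "tanner R nb C0 = {x. \<forall>v\<in>R. map x (nb v) \<in> C0}"

definition unsat :: "nat set \<Rightarrow> (nat \<Rightarrow> nat list) \<Rightarrow> bool list set \<Rightarrow> (nat \<Rightarrow> bool) \<Rightarrow> nat set" where
  "unsat R nb C0 x = {v\<in>R. map x (nb v) \<notin> C0}"

definition flip_contrib ::
  "(nat \<Rightarrow> nat list) \<Rightarrow> bool list set \<Rightarrow> nat \<Rightarrow> nat \<Rightarrow> (nat \<Rightarrow> bool) \<Rightarrow> nat \<Rightarrow> nat \<Rightarrow> real" where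
  "flip_contrib nb C0 c d0 x v i =
     (let z = map x (nb v); w = decode C0 z; h = hdist w z; t = real d0 / 2 in
      if 1 \<le> h \<and> real h < t \<and>
         i = Min {nb v ! j | j. j < length (nb v) \<and> w ! j \<noteq> z ! j}
      then (t - real h) / (real c * t) else 0)"

definition flip_prob ::
  "nat set \<Rightarrow> (nat \<Rightarrow> nat list) \<Rightarrow> bool list set \<Rightarrow> nat \<Rightarrow> nat \<Rightarrow> (nat \<Rightarrow> bool) \<Rightarrow> nat \<Rightarrow> real" where
  "flip_prob R nb C0 c d0 x i = (\<Sum>v\<in>R. flip_contrib nb C0 c d0 x v i)"

definition rand_flip ::
  "nat \<Rightarrow> nat set \<Rightarrow> (nat \<Rightarrow> nat list) \<Rightarrow> bool list set \<Rightarrow> nat \<Rightarrow> nat \<Rightarrow> (nat \<Rightarrow> bool) \<Rightarrow> (nat \<Rightarrow> bool) pmf" where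
  "rand_flip n R nb C0 c d0 x =
     map_pmf (\<lambda>f i. x i \<noteq> f i)
       (Pi_pmf {..<n} False (\<lambda>i. bernoulli_pmf (flip_prob R nb C0 c d0 x i)))"

(* One round of RandDecode on a state (x, time spent so far).  A round with
   U(x) nonempty costs |U(x)| + 1 (enumerating U(x); the indices with p_i \<noteq> 0
   and the flipped bits are at most |U(x)| many). *)
definition rd_step ::
  "nat \<Rightarrow> nat set \<Rightarrow> (nat \<Rightarrow> nat list) \<Rightarrow> bool list set \<Rightarrow> nat \<Rightarrow> nat \<Rightarrow>
   (nat \<Rightarrow> bool) \<times> nat \<Rightarrow> ((nat \<Rightarrow> bool) \<times> nat) pmf" where
  "rd_step n R nb C0 c d0 s =
     (case s of (x, k) \<Rightarrow>
        if unsat R nb C0 x = {} then return_pmf (x, k)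
        else map_pmf (\<lambda>x'. (x', k + card (unsat R nb C0 x) + 1)) (rand_flip n R nb C0 c d0 x))"

(* distribution of (current word, time spent) after N rounds of RandDecode on input x;
   the initialization costs n *)
definition rand_decode_run ::
  "nat \<Rightarrow> nat set \<Rightarrow> (nat \<Rightarrow> nat list) \<Rightarrow> bool list set \<Rightarrow> nat \<Rightarrow> nat \<Rightarrow> nat \<Rightarrow>
   (nat \<Rightarrow> bool) \<Rightarrow> ((nat \<Rightarrow> bool) \<times> nat) pmf" where
  "rand_decode_run n R nb C0 c d0 N x =
     ((\<lambda>D. bind_pmf D (rd_step n R nb C0 c d0)) ^^ N) (return_pmf (x, n))"

end

theory Submission
  imports Defs
begin

(* Let m be the number of errors of the current word, inside the ball of radius alpha n around y.
   A check seeing e >= 1 errors either sees fewer than t = d0/2 of them, so that local decoding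
   recovers y and the flip it proposes removes an error, with probability (t - e)/(c t); or it
   proposes a flip of probability at most (e - t)/(c t), because the decoded word is at distance
   at least d0 from the local word of y. Summing over the checks and using expansion, one round of
   RandFlip lowers m in expectation by beta m, beta = delta - 1/t > 0, and the new m has variance
   at most m. A round costs at most (c + 1) m, so with gamma = (c + 1)/beta the time k plus gamma m
   does not grow in expectation. Hence, with kappa = (1 + gamma alpha) n, the potential
     min 1 ((max (k + gamma m - kappa) 0)^2 + mu m) / n^2   (and 1 outside the ball)
   is a supermartingale along the run: the term mu m pays for the variance created by squaring,
   and a Chebyshev bound pays for leaving the ball. It starts below mu alpha / n and equals 1 on
   every run that has not returned y within time K n >= kappa + n, so the failure probability is
   at most mu alpha / n. *)

section \<open>Moments under product distributions\<close>

lemma finite_set_Pi_pmf: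
  fixes p :: "'a \<Rightarrow> 'b::finite pmf"
  assumes "finite A"
  shows "finite (set_pmf (Pi_pmf A dflt p))"
  using assms by (simp add: set_Pi_pmf finite_PiE_dflt)

lemma integrable_Pi_pmf:
  fixes p :: "'a \<Rightarrow> 'b::finite pmf" and h :: "('a \<Rightarrow> 'b) \<Rightarrow> real"
  assumes "finite A"
  shows "integrable (measure_pmf (Pi_pmf A dflt p)) h"
  by (rule integrable_measure_pmf_finite[OF finite_set_Pi_pmf[OF assms]])

lemma integrable_pmf_finite_type:
  fixes p :: "'b::finite pmf" and h :: "'b \<Rightarrow> real"
  shows "integrable (measure_pmf p) h"
  by (rule integrable_measure_pmf_finite) simp

lemma expectation_Pi_pmf_insert:
  fixes p :: "'a \<Rightarrow> 'b::finite pmf" and h :: "('a \<Rightarrow> 'b) \<Rightarrow> real"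
  assumes "finite A" "a \<notin> A"
  shows "measure_pmf.expectation (Pi_pmf (insert a A) dflt p) h =
    measure_pmf.expectation (p a)
      (\<lambda>b. measure_pmf.expectation (Pi_pmf A dflt p) (\<lambda>f. h (f(a := b))))"
proof -
  have "measure_pmf.expectation (Pi_pmf (insert a A) dflt p) h =
      measure_pmf.expectation (p a \<bind> (\<lambda>b. map_pmf (\<lambda>f. f(a := b)) (Pi_pmf A dflt p))) h"
    using assms by (simp add: Pi_pmf_insert' map_pmf_def)
  also have "\<dots> =
      (\<Sum>b\<in>UNIV. pmf (p a) b * measure_pmf.expectation (Pi_pmf A dflt p) (\<lambda>f. h (f(a := b))))"
    using finite_set_Pi_pmf[OF assms(1)] by (subst pmf_expectation_bind[of UNIV]) auto
  also have "\<dots> = measure_pmf.expectation (p a)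
      (\<lambda>b. measure_pmf.expectation (Pi_pmf A dflt p) (\<lambda>f. h (f(a := b))))"
    by (subst integral_measure_pmf_real[of UNIV]) (auto simp: mult.commute)
  finally show ?thesis .
qed

lemma expectation_Pi_pmf_sum:
  fixes p :: "'a \<Rightarrow> 'b::finite pmf" and X :: "'a \<Rightarrow> 'b \<Rightarrow> real"
  assumes "finite A"
  shows "measure_pmf.expectation (Pi_pmf A dflt p) (\<lambda>f. \<Sum>i\<in>A. X i (f i)) =
    (\<Sum>i\<in>A. measure_pmf.expectation (p i) (X i))"
proof -
  have "measure_pmf.expectation (Pi_pmf A dflt p) (\<lambda>f. \<Sum>i\<in>A. X i (f i)) =
      (\<Sum>i\<in>A. measure_pmf.expectation (map_pmf (\<lambda>f. f i) (Pi_pmf A dflt p)) (X i))"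
    using assms by (subst Bochner_Integration.integral_sum) (auto intro: integrable_Pi_pmf)
  also have "\<dots> = (\<Sum>i\<in>A. measure_pmf.expectation (p i) (X i))"
    using assms by (intro sum.cong refl) (simp add: Pi_pmf_component)
  finally show ?thesis .
qed

lemma variance_Pi_pmf_sum:
  fixes p :: "'a \<Rightarrow> 'b::finite pmf" and X :: "'a \<Rightarrow> 'b \<Rightarrow> real"
  assumes "finite A"
  shows "measure_pmf.variance (Pi_pmf A dflt p) (\<lambda>f. \<Sum>i\<in>A. X i (f i)) =
    (\<Sum>i\<in>A. measure_pmf.variance (p i) (X i))"
  using assms
proof (induction A rule: finite_induct)
  case (insert a A)
  let ?Q = "Pi_pmf A dflt p"
  define m where "m i = measure_pmf.expectation (p i) (X i)" for i
  define S where "S f = (\<Sum>i\<in>A. X i (f i))" for f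
  have upd: "(\<Sum>i\<in>insert a A. X i ((f(a := b)) i)) = X a b + S f" for f b
    using insert.hyps unfolding S_def by (auto intro!: sum.cong)
  have ES: "measure_pmf.expectation ?Q (\<lambda>f. \<Sum>i\<in>A. X i (f i)) = (\<Sum>i\<in>A. m i)"
    unfolding m_def by (rule expectation_Pi_pmf_sum[OF insert.hyps(1)])
  have IH: "measure_pmf.expectation ?Q (\<lambda>f. (S f - (\<Sum>i\<in>A. m i))\<^sup>2) =
      (\<Sum>i\<in>A. measure_pmf.variance (p i) (X i))"
    using insert.IH unfolding S_def ES .
  have centered: "measure_pmf.expectation ?Q (\<lambda>f. S f - (\<Sum>i\<in>A. m i)) = 0"
    using insert.hyps ES unfolding S_def by (simp add: Bochner_Integration.integral_diff integrable_Pi_pmf)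
  have inner: "measure_pmf.expectation ?Q (\<lambda>f. (X a b + S f - (\<Sum>i\<in>insert a A. m i))\<^sup>2) =
      (X a b - m a)\<^sup>2 + (\<Sum>i\<in>A. measure_pmf.variance (p i) (X i))" for b
  proof -
    have "(X a b + S f - (\<Sum>i\<in>insert a A. m i))\<^sup>2 = (X a b - m a)\<^sup>2
        + 2 * (X a b - m a) * (S f - (\<Sum>i\<in>A. m i)) + (S f - (\<Sum>i\<in>A. m i))\<^sup>2" for f
      using insert.hyps by (simp add: power2_eq_square algebra_simps)
    then show ?thesis
      using insert.hyps IH centered
      by (simp add: integrable_Pi_pmf Bochner_Integration.integral_add)
  qed
  have "measure_pmf.variance (Pi_pmf (insert a A) dflt p) (\<lambda>f. \<Sum>i\<in>insert a A. X i (f i)) =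
      measure_pmf.expectation (p a)
        (\<lambda>b. measure_pmf.expectation ?Q (\<lambda>f. (X a b + S f - (\<Sum>i\<in>insert a A. m i))\<^sup>2))"
    using insert.hyps
    by (simp add: expectation_Pi_pmf_insert expectation_Pi_pmf_sum m_def upd
        del: sum.insert fun_upd_apply)
  also have "\<dots> = measure_pmf.variance (p a) (X a) + (\<Sum>i\<in>A. measure_pmf.variance (p i) (X i))"
    using inner by (simp add: m_def integrable_pmf_finite_type)
  finally show ?case
    using insert.hyps by simp
qed simp

lemma hdist_n_random_flip_moments:
  fixes x y :: "nat \<Rightarrow> bool" and p :: "nat \<Rightarrow> real"
  assumes p: "\<And>i. i < n \<Longrightarrow> 0 \<le> p i \<and> p i \<le> 1"
  defines "D \<equiv> map_pmf (\<lambda>f i. x i \<noteq> f i) (Pi_pmf {..<n} False (\<lambda>i. bernoulli_pmf (p i)))"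
  shows "measure_pmf.expectation D (\<lambda>z. real (hdist_n n z y)) =
      (\<Sum>i<n. if x i \<noteq> y i then 1 - p i else p i)"
    and "measure_pmf.variance D (\<lambda>z. real (hdist_n n z y)) = (\<Sum>i<n. p i * (1 - p i))"
proof -
  define X :: "nat \<Rightarrow> bool \<Rightarrow> real" where "X i b = of_bool ((x i \<noteq> b) \<noteq> y i)" for i b
  have count: "real (hdist_n n (\<lambda>i. x i \<noteq> f i) y) = (\<Sum>i<n. X i (f i))" for f
    by (auto simp: hdist_n_def X_def lessThan_def Collect_conj_eq)
  have "measure_pmf.expectation D (\<lambda>z. real (hdist_n n z y)) =
      (\<Sum>i<n. measure_pmf.expectation (bernoulli_pmf (p i)) (X i))"
    unfolding D_def integral_map_pmf count by (rule expectation_Pi_pmf_sum) simp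
  also have "\<dots> = (\<Sum>i<n. if x i \<noteq> y i then 1 - p i else p i)"
    using p by (intro sum.cong refl) (auto simp: X_def)
  finally show "measure_pmf.expectation D (\<lambda>z. real (hdist_n n z y)) =
      (\<Sum>i<n. if x i \<noteq> y i then 1 - p i else p i)" .
  have "measure_pmf.variance D (\<lambda>z. real (hdist_n n z y)) =
      (\<Sum>i<n. measure_pmf.variance (bernoulli_pmf (p i)) (X i))"
    unfolding D_def integral_map_pmf count by (rule variance_Pi_pmf_sum) simp
  also have "\<dots> = (\<Sum>i<n. p i * (1 - p i))"
    using p by (intro sum.cong refl) (auto simp: X_def power2_eq_square algebra_simps)
  finally show "measure_pmf.variance D (\<lambda>z. real (hdist_n n z y)) = (\<Sum>i<n. p i * (1 - p i))" .
qed

text \<open>The convex function \<open>u \<mapsto> (max (u - c) 0)\<^sup>2\<close> has second derivative at most 2.\<close>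
lemma pos_part_sq_le:
  fixes u w c :: real
  shows "(max (u - c) 0)\<^sup>2 \<le> (max (w - c) 0)\<^sup>2 + 2 * max (w - c) 0 * (u - w) + (u - w)\<^sup>2"
proof (cases "c \<le> w")
  case True
  then have w: "max (w - c) 0 = w - c"
    by simp
  have "(max (u - c) 0)\<^sup>2 \<le> (u - c)\<^sup>2"
    by (cases "c \<le> u") (auto simp: max_def)
  also have "\<dots> = (w - c)\<^sup>2 + 2 * (w - c) * (u - w) + (u - w)\<^sup>2"
    by (simp add: power2_eq_square algebra_simps)
  finally show ?thesis
    unfolding w .
next
  case False
  have "(max (u - c) 0)\<^sup>2 \<le> (u - w)\<^sup>2"
  proof (cases "c \<le> u")
    case True
    then have "(u - c)\<^sup>2 \<le> (u - w)\<^sup>2"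
      using False by (intro power_mono) auto
    then show ?thesis
      using True by (simp add: max_def)
  qed (auto simp: max_def)
  then show ?thesis
    using False by (simp add: max_def)
qed

lemma expectation_pos_part_sq_le:
  fixes D :: "'a pmf" and M :: "'a \<Rightarrow> real" and w g c :: real
  assumes "finite (set_pmf D)"
  shows "measure_pmf.expectation D
      (\<lambda>z. (max (w + g * (M z - measure_pmf.expectation D M) - c) 0)\<^sup>2)
    \<le> (max (w - c) 0)\<^sup>2 + g\<^sup>2 * measure_pmf.variance D M"
proof -
  let ?E = "measure_pmf.expectation D" and ?m = "max (w - c) 0"
  have int: "integrable (measure_pmf D) f" for f :: "'a \<Rightarrow> real"
    using assms by (rule integrable_measure_pmf_finite)
  have "?E (\<lambda>z. (max (w + g * (M z - ?E M) - c) 0)\<^sup>2) \<le>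
      ?E (\<lambda>z. ?m\<^sup>2 + 2 * ?m * g * (M z - ?E M) + g\<^sup>2 * (M z - ?E M)\<^sup>2)"
    using pos_part_sq_le[of "w + g * (M _ - ?E M)" c w]
    by (intro integral_mono int) (simp add: power_mult_distrib mult.assoc)
  also have "\<dots> = ?m\<^sup>2 + 2 * ?m * g * ?E (\<lambda>z. M z - ?E M) + g\<^sup>2 * measure_pmf.variance D M"
    by (simp add: int Bochner_Integration.integral_add)
  also have "?E (\<lambda>z. M z - ?E M) = 0"
    by (simp add: int Bochner_Integration.integral_diff)
  finally show ?thesis
    by simp
qed

section \<open>Hamming distance and nearest-codeword decoding\<close>

lemma hdist_sym: "length u = length w \<Longrightarrow> hdist u w = hdist w u"
  unfolding hdist_def by metis

lemma hdist_self [simp]: "hdist u u = 0"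
  by (simp add: hdist_def)

lemma hdist_triangle:
  assumes "length u = length z" "length z = length w"
  shows "hdist u w \<le> hdist u z + hdist z w"
proof -
  have "{j. j < length u \<and> u ! j \<noteq> w ! j} \<subseteq>
      {j. j < length u \<and> u ! j \<noteq> z ! j} \<union> {j. j < length z \<and> z ! j \<noteq> w ! j}"
    using assms by auto
  then have "hdist u w \<le> card ({j. j < length u \<and> u ! j \<noteq> z ! j} \<union> {j. j < length z \<and> z ! j \<noteq> w ! j})"
    unfolding hdist_def by (intro card_mono) auto
  also have "\<dots> \<le> hdist u z + hdist z w"
    unfolding hdist_def by (rule card_Un_le)
  finally show ?thesis .
qed

lemma hdist_neq_0_obtains:
  assumes "hdist u w \<noteq> 0"
  obtains j where "j < length u" "u ! j \<noteq> w ! j"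
proof -
  have "{j. j < length u \<and> u ! j \<noteq> w ! j} \<noteq> {}"
    using assms unfolding hdist_def by (metis card.empty)
  then show thesis using that by blast
qed

lemma trans_False_True: "trans {(False, True)}"
  by (simp add: trans_def)

lemma lex_le_trans:
  assumes "lex_le u v" "lex_le v w"
  shows "lex_le u w"
proof (cases "u = v \<or> v = w")
  case False
  then have "(u, v) \<in> lexord {(False, True)}" "(v, w) \<in> lexord {(False, True)}"
    using assms by (auto simp: lex_le_def)
  then have "(u, w) \<in> lexord {(False, True)}"
    using trans_False_True by (rule lexord_trans)
  then show ?thesis
    by (simp add: lex_le_def)
qed (use assms in auto)

lemma lex_le_antisym:
  assumes "lex_le u w" "lex_le w u"
  shows "u = w"
proof (rule ccontr)
  assume "u \<noteq> w"
  then have "(u, w) \<in> lexord {(False, True)}" "(w, u) \<in> lexord {(False, True)}"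
    using assms by (auto simp: lex_le_def)
  then have "(u, u) \<in> lexord {(False, True)}"
    using trans_False_True by (rule lexord_trans)
  then show False
    using lexord_irreflexive[of "{(False, True)}" u] by simp
qed

lemma lex_le_total: "lex_le u w \<or> lex_le w u"
  unfolding lex_le_def using lexord_linear[of "{(False, True)}" u w] by auto

lemma lex_le_refl [simp]: "lex_le u u"
  by (simp add: lex_le_def)

lemma lex_le_minimum_exists:
  assumes "finite A" "A \<noteq> {}"
  obtains a where "a \<in> A" "\<And>u. u \<in> A \<Longrightarrow> lex_le a u"
  using assms
proof (induction A arbitrary: thesis rule: finite_ne_induct)
  case (singleton b)
  show ?case by (rule singleton.prems[of b]) simp_all
next
  case (insert b A)
  obtain a where a: "a \<in> A" "\<And>u. u \<in> A \<Longrightarrow> lex_le a u"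
    using insert.IH by blast
  show ?case
  proof (cases "lex_le b a")
    case True
    then show ?thesis
      using a lex_le_trans[OF True a(2)] by (intro insert.prems[of b]) auto
  next
    case False
    then have "lex_le a b"
      using lex_le_total by blast
    then show ?thesis
      using a by (intro insert.prems[of a]) auto
  qed
qed

lemma decode_eqI:
  assumes "a \<in> C0"
    and "\<And>u. u \<in> C0 \<Longrightarrow> hdist a z < hdist u z \<or> (hdist a z = hdist u z \<and> lex_le a u)"
  shows "decode C0 z = a"
  unfolding decode_def
proof (rule the_equality)
  show "a \<in> C0 \<and> (\<forall>u\<in>C0. hdist a z < hdist u z \<or> hdist a z = hdist u z \<and> lex_le a u)"
    using assms by blast
next
  fix w
  assume w: "w \<in> C0 \<and> (\<forall>u\<in>C0. hdist w z < hdist u z \<or> hdist w z = hdist u z \<and> lex_le w u)"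
  then have "hdist w z < hdist a z \<or> hdist w z = hdist a z \<and> lex_le w a"
    using assms(1) by simp
  moreover have "hdist a z < hdist w z \<or> hdist a z = hdist w z \<and> lex_le a w"
    using assms(2) w by simp
  ultimately have "lex_le w a" "lex_le a w"
    by auto
  then show "w = a"
    by (rule lex_le_antisym)
qed

lemma decode_closest:
  assumes "finite C0" "C0 \<noteq> {}"
  shows "decode C0 z \<in> C0" and "\<And>u. u \<in> C0 \<Longrightarrow> hdist (decode C0 z) z \<le> hdist u z"
proof -
  define r where "r = Min ((\<lambda>u. hdist u z) ` C0)"
  have r_le: "r \<le> hdist u z" if "u \<in> C0" for u
    unfolding r_def using assms that by simp
  have "r \<in> (\<lambda>u. hdist u z) ` C0"
    unfolding r_def using assms by (intro Min_in) auto
  then have ne: "{w\<in>C0. hdist w z = r} \<noteq> {}"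
    by auto
  have fin: "finite {w\<in>C0. hdist w z = r}"
    using assms(1) by simp
  obtain a where a_in: "a \<in> {w\<in>C0. hdist w z = r}"
    and a_min: "\<And>u. u \<in> {w\<in>C0. hdist w z = r} \<Longrightarrow> lex_le a u"
    using lex_le_minimum_exists[OF fin ne] by blast
  then have a: "a \<in> C0" "hdist a z = r"
    by auto
  have "decode C0 z = a"
  proof (rule decode_eqI[OF a(1)])
    fix u assume "u \<in> C0"
    then show "hdist a z < hdist u z \<or> hdist a z = hdist u z \<and> lex_le a u"
      using a(2) a_min[of u] r_le[of u] by (cases "hdist u z = r") auto
  qed
  then show "decode C0 z \<in> C0" "\<And>u. u \<in> C0 \<Longrightarrow> hdist (decode C0 z) z \<le> hdist u z"
    using a r_le by auto
qed

section \<open>Runs of the decoder\<close>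

lemma finite_set_rand_flip: "finite (set_pmf (rand_flip n R nb C0 c d0 x))"
  by (simp add: rand_flip_def finite_set_Pi_pmf)

lemma rand_decode_run_Suc:
  "rand_decode_run n R nb C0 c d0 (Suc N) x =
     rand_decode_run n R nb C0 c d0 N x \<bind> rd_step n R nb C0 c d0"
  by (simp add: rand_decode_run_def)

lemma rand_decode_run_halted:
  assumes "unsat R nb C0 x = {}"
  shows "rand_decode_run n R nb C0 c d0 N x = return_pmf (x, n)"
  by (induction N) (simp_all add: rand_decode_run_def rd_step_def bind_return_pmf assms)

lemma rand_decode_run_time:
  assumes "finite R" "s \<in> set_pmf (rand_decode_run n R nb C0 c d0 N x)"
  shows "unsat R nb C0 (fst s) = {} \<or> n + 2 * N \<le> snd s"
  using assms(2)
proof (induction N arbitrary: s)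
  case (Suc N)
  then obtain x' k where s': "(x', k) \<in> set_pmf (rand_decode_run n R nb C0 c d0 N x)"
    and s: "s \<in> set_pmf (rd_step n R nb C0 c d0 (x', k))"
    by (auto simp: rand_decode_run_Suc)
  show ?case
  proof (cases "unsat R nb C0 x' = {}")
    case True
    then show ?thesis using s by (simp add: rd_step_def)
  next
    case False
    then have "card (unsat R nb C0 x') \<ge> 1"
      using assms(1) by (simp add: unsat_def Suc_le_eq card_gt_0_iff)
    then show ?thesis
      using Suc.IH[OF s'] s False by (auto simp: rd_step_def)
  qed
qed (simp add: rand_decode_run_def)

lemma nn_integral_funpow_bind_pmf_le:
  fixes K :: "'a \<Rightarrow> 'a pmf" and D0 :: "'a pmf"
  assumes "\<And>s. (\<integral>\<^sup>+s'. \<Phi> s' \<partial>K s) \<le> \<Phi> s"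
  shows "(\<integral>\<^sup>+s. \<Phi> s \<partial>((\<lambda>D. bind_pmf D K) ^^ N) D0) \<le> (\<integral>\<^sup>+s. \<Phi> s \<partial>D0)"
proof (induction N)
  case (Suc N)
  have "(\<integral>\<^sup>+s. \<Phi> s \<partial>((\<lambda>D. bind_pmf D K) ^^ Suc N) D0) =
      (\<integral>\<^sup>+s. (\<integral>\<^sup>+s'. \<Phi> s' \<partial>K s) \<partial>((\<lambda>D. bind_pmf D K) ^^ N) D0)"
    by simp
  also have "\<dots> \<le> (\<integral>\<^sup>+s. \<Phi> s \<partial>((\<lambda>D. bind_pmf D K) ^^ N) D0)"
    by (intro nn_integral_mono assms)
  finally show ?case using Suc.IH by simp
qed simp

section \<open>Local analysis of a check\<close>

locale decoding_params =
  fixes c d d0 :: nat and C0 :: "bool list set" and \<alpha> \<delta> :: real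
  assumes c_pos: "c > 0" and d_pos: "d > 0" and alpha_pos: "\<alpha> > 0" and delta_le_1: "\<delta> \<le> 1"
    and linear: "linear_code d C0" and min_dist: "min_distance C0 d0"
    and d0_delta: "real d0 * \<delta> > 2"
begin

text \<open>Per round the number of errors drops by the factor
  \<open>1 - \<beta>\<close> in expectation, \<open>\<gamma>\<close> converts errors into running time, \<open>\<mu>\<close> pays for the variance.\<close>

definition thr :: real where "thr = real d0 / 2"

definition \<beta> :: real where "\<beta> = \<delta> - 1 / thr"

definition \<gamma> :: real where "\<gamma> = (real c + 1) / \<beta>"

definition \<mu> :: real where "\<mu> = \<gamma>\<^sup>2 / \<beta> + 1 / (\<beta> ^ 3 * \<alpha>\<^sup>2)"

definition K :: nat where "K = nat \<lceil>2 + \<gamma> * \<alpha>\<rceil>"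

lemma thr_gt_1: "thr > 1"
proof -
  have "real d0 * \<delta> \<le> real d0"
    using delta_le_1 by (simp add: mult_left_le)
  then show ?thesis
    using d0_delta by (simp add: thr_def)
qed

lemma beta_pos: "\<beta> > 0"
  using d0_delta thr_gt_1 by (simp add: \<beta>_def thr_def field_simps)

lemma beta_le_1: "\<beta> \<le> 1"
proof -
  have "0 < 1 / thr"
    using thr_gt_1 by simp
  then show ?thesis
    unfolding \<beta>_def using delta_le_1 by linarith
qed

lemma gamma_beta: "\<gamma> * \<beta> = real c + 1"
  using beta_pos by (simp add: \<gamma>_def)

lemma gamma_pos: "\<gamma> > 0"
  using beta_pos by (simp add: \<gamma>_def)

lemma mu_nonneg: "\<mu> \<ge> 0"
  using beta_pos by (simp add: \<mu>_def)

lemma mu_beta: "\<mu> * \<beta> = \<gamma>\<^sup>2 + 1 / (\<beta>\<^sup>2 * \<alpha>\<^sup>2)"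
  using beta_pos alpha_pos by (simp add: \<mu>_def field_simps power2_eq_square power3_eq_cube)

lemma K_mult_ge: "(2 + \<gamma> * \<alpha>) * real n \<le> real (K * n)"
proof -
  have "2 + \<gamma> * \<alpha> \<le> real K"
    unfolding K_def by (rule real_nat_ceiling_ge)
  then show ?thesis
    by (simp add: mult_right_mono)
qed

lemma code_length: "w \<in> C0 \<Longrightarrow> length w = d"
  using linear by (auto simp: linear_code_def)

lemma code_finite: "finite C0"
proof (rule finite_subset)
  show "C0 \<subseteq> {w. set w \<subseteq> UNIV \<and> length w = d}"
    using code_length by auto
  show "finite {w. set w \<subseteq> (UNIV :: bool set) \<and> length w = d}"
    by (rule finite_lists_length_eq) simp
qed

lemma code_nonempty: "C0 \<noteq> {}"
  using linear by (auto simp: linear_code_def)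

lemma code_dist: "u \<in> C0 \<Longrightarrow> w \<in> C0 \<Longrightarrow> u \<noteq> w \<Longrightarrow> d0 \<le> hdist u w"
  using min_dist by (auto simp: min_distance_def)

end

locale tanner_instance = decoding_params +
  fixes n :: nat and R :: "nat set" and nb :: "nat \<Rightarrow> nat list" and y :: "nat \<Rightarrow> bool"
  assumes expander: "bip_expander n R nb c d \<alpha> \<delta>" and codeword: "y \<in> tanner R nb C0"
begin

abbreviation nerr :: "(nat \<Rightarrow> bool) \<Rightarrow> nat" where "nerr x \<equiv> hdist_n n x y"

definition errs :: "(nat \<Rightarrow> bool) \<Rightarrow> nat set" where "errs x = {i. i < n \<and> x i \<noteq> y i}"

definition local_errs :: "(nat \<Rightarrow> bool) \<Rightarrow> nat \<Rightarrow> nat" where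
  "local_errs x v = card (set (nb v) \<inter> errs x)"

definition dec :: "(nat \<Rightarrow> bool) \<Rightarrow> nat \<Rightarrow> bool list" where
  "dec x v = decode C0 (map x (nb v))"

definition dec_dist :: "(nat \<Rightarrow> bool) \<Rightarrow> nat \<Rightarrow> nat" where
  "dec_dist x v = hdist (dec x v) (map x (nb v))"

definition flip_weight :: "(nat \<Rightarrow> bool) \<Rightarrow> nat \<Rightarrow> real" where
  "flip_weight x v = (if 1 \<le> dec_dist x v \<and> real (dec_dist x v) < thr
     then (thr - real (dec_dist x v)) / (real c * thr) else 0)"

definition flip_target :: "(nat \<Rightarrow> bool) \<Rightarrow> nat \<Rightarrow> nat" where
  "flip_target x v = Min {nb v ! j | j. j < length (nb v) \<and> dec x v ! j \<noteq> map x (nb v) ! j}"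

text \<open>The contribution of check \<open>v\<close> to the expected change of the number of errors.\<close>
definition error_change :: "(nat \<Rightarrow> bool) \<Rightarrow> nat \<Rightarrow> real" where
  "error_change x v = (if flip_target x v \<in> errs x then - flip_weight x v else flip_weight x v)"

lemma finite_R: "finite R"
  using expander by (simp add: bip_expander_def biregular_def)

lemma neighbours: "v \<in> R \<Longrightarrow> length (nb v) = d \<and> distinct (nb v) \<and> set (nb v) \<subseteq> {..<n}"
  using expander by (simp add: bip_expander_def biregular_def)

lemma left_degree: "i < n \<Longrightarrow> card {v\<in>R. i \<in> set (nb v)} = c"
  using expander by (simp add: bip_expander_def biregular_def)

lemma local_codeword: "v \<in> R \<Longrightarrow> map y (nb v) \<in> C0"
  using codeword by (simp add: tanner_def)

lemma finite_errs: "finite (errs x)"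
  by (simp add: errs_def)

lemma nerr_eq_card: "nerr x = card (errs x)"
  by (simp add: hdist_n_def errs_def)

lemma R_empty_if_n_0: "n = 0 \<Longrightarrow> R = {}"
  using neighbours d_pos by fastforce

lemma flip_contrib_eq:
  "flip_contrib nb C0 c d0 x v i = (if i = flip_target x v then flip_weight x v else 0)"
  by (simp add: flip_contrib_def Let_def flip_weight_def flip_target_def dec_dist_def dec_def thr_def)

lemma flip_prob_eq:
  "flip_prob R nb C0 c d0 x i = (\<Sum>v\<in>R. if i = flip_target x v then flip_weight x v else 0)"
  by (simp add: flip_prob_def flip_contrib_eq)

lemma hdist_local_words:
  assumes v: "v \<in> R"
  shows "hdist (map x (nb v)) (map y (nb v)) = local_errs x v"
proof -
  have "{j. j < length (map x (nb v)) \<and> map x (nb v) ! j \<noteq> map y (nb v) ! j} =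
      {j. j < d \<and> x (nb v ! j) \<noteq> y (nb v ! j)}"
    using neighbours[OF v] by auto
  moreover have "nb v ! j < n" if "j < length (nb v)" for j
    using neighbours[OF v] nth_mem[OF that] by auto
  then have "(!) (nb v) ` {j. j < d \<and> x (nb v ! j) \<noteq> y (nb v ! j)} = set (nb v) \<inter> errs x"
    using neighbours[OF v] by (auto simp: errs_def in_set_conv_nth)
  moreover have "inj_on ((!) (nb v)) {j. j < d \<and> x (nb v ! j) \<noteq> y (nb v ! j)}"
    using neighbours[OF v] by (intro inj_on_nth) auto
  ultimately show ?thesis
    unfolding hdist_def local_errs_def by (metis card_image)
qed

lemma local_word_eq_if_no_local_errs:
  assumes v: "v \<in> R" and "local_errs x v = 0"
  shows "map x (nb v) = map y (nb v)"
proof -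
  have "set (nb v) \<inter> errs x = {}"
    using assms finite_errs by (simp add: local_errs_def)
  then show ?thesis
    using neighbours[OF v] by (auto simp: errs_def)
qed

lemma dec_in_code: "dec x v \<in> C0"
  unfolding dec_def by (rule decode_closest(1)[OF code_finite code_nonempty])

lemma dec_dist_le: "u \<in> C0 \<Longrightarrow> dec_dist x v \<le> hdist u (map x (nb v))"
  unfolding dec_dist_def dec_def by (rule decode_closest(2)[OF code_finite code_nonempty])

lemma dec_dist_eq_0: "map x (nb v) \<in> C0 \<Longrightarrow> dec_dist x v = 0"
  using dec_dist_le[of "map x (nb v)" x v] by simp

lemma dec_dist_le_local_errs: "v \<in> R \<Longrightarrow> dec_dist x v \<le> local_errs x v"
  using dec_dist_le[OF local_codeword] hdist_local_words hdist_sym neighbours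
  by (metis length_map)

lemma min_dist_le_dec_dist_add_local_errs:
  assumes v: "v \<in> R" and "dec x v \<noteq> map y (nb v)"
  shows "d0 \<le> dec_dist x v + local_errs x v"
proof -
  have "d0 \<le> hdist (dec x v) (map y (nb v))"
    using code_dist[OF dec_in_code local_codeword[OF v] assms(2)] .
  also have "\<dots> \<le> dec_dist x v + local_errs x v"
    unfolding dec_dist_def hdist_local_words[OF v, symmetric]
    using neighbours[OF v] code_length[OF dec_in_code] by (intro hdist_triangle) auto
  finally show ?thesis .
qed

lemma flip_target_obtains:
  assumes v: "v \<in> R" and "dec_dist x v \<noteq> 0"
  obtains j where "j < d" "flip_target x v = nb v ! j" "dec x v ! j \<noteq> x (nb v ! j)"
proof -
  let ?S = "{nb v ! j | j. j < length (nb v) \<and> dec x v ! j \<noteq> map x (nb v) ! j}"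
  obtain j where "j < length (dec x v)" "dec x v ! j \<noteq> map x (nb v) ! j"
    using assms(2) unfolding dec_dist_def by (rule hdist_neq_0_obtains)
  then have "?S \<noteq> {}"
    using neighbours[OF v] code_length[OF dec_in_code] by auto
  then have "flip_target x v \<in> ?S"
    unfolding flip_target_def by (intro Min_in) auto
  then obtain j where "j < length (nb v)" "flip_target x v = nb v ! j"
    "dec x v ! j \<noteq> map x (nb v) ! j"
    by blast
  then show thesis
    using that[of j] neighbours[OF v] by auto
qed

lemma flip_weight_nonneg: "0 \<le> flip_weight x v"
  using thr_gt_1 c_pos by (simp add: flip_weight_def)

lemma flip_weight_le: "flip_weight x v \<le> 1 / real c"
proof -
  have "(thr - real (dec_dist x v)) / (real c * thr) \<le> thr / (real c * thr)"
    using thr_gt_1 c_pos by (intro divide_right_mono) auto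
  then show ?thesis
    using thr_gt_1 c_pos by (auto simp: flip_weight_def)
qed

lemma flip_weight_eq_0: "map x (nb v) \<in> C0 \<Longrightarrow> flip_weight x v = 0"
  by (simp add: flip_weight_def dec_dist_eq_0)

lemma flip_weight_le_local_errs:
  assumes v: "v \<in> R"
  shows "flip_weight x v \<le> real (local_errs x v) / real c"
proof (cases "local_errs x v = 0")
  case True
  have "map x (nb v) \<in> C0"
    unfolding local_word_eq_if_no_local_errs[OF v True] by (rule local_codeword[OF v])
  then show ?thesis
    using True by (simp add: flip_weight_eq_0)
next
  case False
  then have "1 / real c \<le> real (local_errs x v) / real c"
    using c_pos by (intro divide_right_mono) auto
  then show ?thesis
    using flip_weight_le[of x v] by linarith
qed

lemma flip_target_mem:
  assumes v: "v \<in> R" and "flip_weight x v \<noteq> 0"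
  shows "flip_target x v \<in> set (nb v)"
proof -
  have "dec_dist x v \<noteq> 0"
    using assms(2) by (auto simp: flip_weight_def split: if_splits)
  then obtain j where "j < d" "flip_target x v = nb v ! j"
    using flip_target_obtains[OF v] by metis
  then show ?thesis
    using neighbours[OF v] by simp
qed

lemma error_change_if_few_local_errs:
  assumes v: "v \<in> R" and e: "0 < local_errs x v" and few: "real (local_errs x v) < thr"
  shows "error_change x v = (real (local_errs x v) - thr) / (real c * thr)"
proof -
  have "dec x v = map y (nb v)"
    using min_dist_le_dec_dist_add_local_errs[OF v] dec_dist_le_local_errs[OF v, of x] few
    by (fastforce simp: thr_def)
  moreover have dd: "dec_dist x v = local_errs x v"
    using calculation hdist_local_words[OF v] hdist_sym[of "map x (nb v)" "map y (nb v)"]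
    by (simp add: dec_dist_def)
  ultimately obtain j where "j < d" "flip_target x v = nb v ! j" "y (nb v ! j) \<noteq> x (nb v ! j)"
    using flip_target_obtains[OF v, of x] e neighbours[OF v] by auto
  then have "flip_target x v \<in> errs x"
    using neighbours[OF v] nth_mem by (fastforce simp: errs_def)
  then have "error_change x v = - ((thr - real (local_errs x v)) / (real c * thr))"
    using dd e few by (simp add: error_change_def flip_weight_def)
  then show ?thesis
    by (metis minus_diff_eq minus_divide_left)
qed

lemma flip_weight_le_if_many_local_errs:
  assumes v: "v \<in> R" and many: "thr \<le> real (local_errs x v)"
  shows "flip_weight x v \<le> (real (local_errs x v) - thr) / (real c * thr)"
proof (cases "flip_weight x v = 0")
  case True
  then show ?thesis
    using many thr_gt_1 c_pos by simp
next
  case False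
  then have close: "real (dec_dist x v) < thr"
    and weight: "flip_weight x v = (thr - real (dec_dist x v)) / (real c * thr)"
    by (auto simp: flip_weight_def split: if_splits)
  have "dec x v \<noteq> map y (nb v)"
    using close many hdist_local_words[OF v] hdist_sym[of "map x (nb v)" "map y (nb v)"]
    by (auto simp: dec_dist_def)
  then have "d0 \<le> dec_dist x v + local_errs x v"
    by (rule min_dist_le_dec_dist_add_local_errs[OF v])
  then have "thr - real (dec_dist x v) \<le> real (local_errs x v) - thr"
    by (simp add: thr_def)
  then show ?thesis
    unfolding weight using thr_gt_1 c_pos by (intro divide_right_mono) auto
qed

lemma error_change_le:
  assumes v: "v \<in> R" and e: "0 < local_errs x v"
  shows "error_change x v \<le> (real (local_errs x v) - thr) / (real c * thr)"
proof (cases "real (local_errs x v) < thr")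
  case True
  then show ?thesis
    using error_change_if_few_local_errs[OF v e] by simp
next
  case False
  have "error_change x v \<le> flip_weight x v"
    using flip_weight_nonneg[of x v] by (simp add: error_change_def)
  also have "\<dots> \<le> (real (local_errs x v) - thr) / (real c * thr)"
    using False by (intro flip_weight_le_if_many_local_errs[OF v]) simp
  finally show ?thesis .
qed

lemma error_change_eq_0:
  assumes v: "v \<in> R" and "local_errs x v = 0"
  shows "error_change x v = 0"
proof -
  have "map x (nb v) \<in> C0"
    unfolding local_word_eq_if_no_local_errs[OF assms] by (rule local_codeword[OF v])
  then show ?thesis
    by (simp add: error_change_def flip_weight_eq_0)
qed

section \<open>One round of RandFlip\<close>

lemma sum_local_errs: "(\<Sum>v\<in>R. local_errs x v) = c * nerr x"
proof -
  have "(\<Sum>v\<in>R. local_errs x v) = (\<Sum>v\<in>R. \<Sum>i\<in>errs x. of_bool (i \<in> set (nb v)))"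
    by (intro sum.cong refl) (simp add: local_errs_def finite_errs Int_commute)
  also have "\<dots> = (\<Sum>i\<in>errs x. \<Sum>v\<in>R. of_bool (i \<in> set (nb v)))"
    by (rule sum.swap)
  also have "\<dots> = (\<Sum>i\<in>errs x. c)"
  proof (intro sum.cong refl)
    fix i assume "i \<in> errs x"
    then have "i < n"
      by (simp add: errs_def)
    then show "(\<Sum>v\<in>R. of_bool (i \<in> set (nb v))) = c"
      using left_degree finite_R by (simp add: Int_def)
  qed
  also have "\<dots> = c * nerr x"
    by (simp add: nerr_eq_card)
  finally show ?thesis .
qed

lemma sum_local_errs_touched:
  "(\<Sum>v\<in>{v\<in>R. 0 < local_errs x v}. real (local_errs x v)) = real c * real (nerr x)"
proof -
  have "(\<Sum>v\<in>{v\<in>R. 0 < local_errs x v}. real (local_errs x v)) = (\<Sum>v\<in>R. real (local_errs x v))"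
    using finite_R by (intro sum.mono_neutral_left) auto
  then show ?thesis
    using sum_local_errs[of x] by (metis of_nat_mult of_nat_sum)
qed

lemma card_touched_checks_ge:
  assumes "real (nerr x) \<le> \<alpha> * real n"
  shows "\<delta> * real c * real (nerr x) \<le> real (card {v\<in>R. 0 < local_errs x v})"
proof -
  have "nbhd R nb (errs x) = {v\<in>R. 0 < local_errs x v}"
    using finite_errs[of x] by (auto simp: nbhd_def local_errs_def card_gt_0_iff)
  moreover have "errs x \<subseteq> {..<n}"
    by (auto simp: errs_def)
  ultimately show ?thesis
    using expander assms unfolding bip_expander_def nerr_eq_card by metis
qed

lemma sum_error_change_le:
  assumes "real (nerr x) \<le> \<alpha> * real n"
  shows "(\<Sum>v\<in>R. error_change x v) \<le> - \<beta> * real (nerr x)"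
proof -
  let ?N = "{v\<in>R. 0 < local_errs x v}"
  have "(\<Sum>v\<in>R. error_change x v) \<le>
      (\<Sum>v\<in>R. if 0 < local_errs x v then (real (local_errs x v) - thr) / (real c * thr) else 0)"
    by (intro sum_mono) (auto simp: error_change_le error_change_eq_0)
  also have "\<dots> = (\<Sum>v\<in>?N. (real (local_errs x v) - thr) / (real c * thr))"
    using finite_R by (simp add: sum.If_cases Int_def)
  also have "\<dots> = ((\<Sum>v\<in>?N. real (local_errs x v)) - thr * real (card ?N)) / (real c * thr)"
    by (simp add: sum_divide_distrib[symmetric] sum_subtractf)
  also have "\<dots> = (real c * real (nerr x) - thr * real (card ?N)) / (real c * thr)"
    unfolding sum_local_errs_touched ..
  also have "\<dots> \<le> (real c * real (nerr x) - thr * (\<delta> * real c * real (nerr x))) / (real c * thr)"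
    using card_touched_checks_ge[OF assms] thr_gt_1 c_pos by (intro divide_right_mono) auto
  also have "\<dots> = - \<beta> * real (nerr x)"
    using thr_gt_1 c_pos by (simp add: \<beta>_def field_simps)
  finally show ?thesis .
qed

lemma flip_prob_bounds:
  assumes "i < n"
  shows "0 \<le> flip_prob R nb C0 c d0 x i \<and> flip_prob R nb C0 c d0 x i \<le> 1"
proof
  show "0 \<le> flip_prob R nb C0 c d0 x i"
    unfolding flip_prob_eq by (intro sum_nonneg) (simp add: flip_weight_nonneg)
  have "flip_prob R nb C0 c d0 x i \<le> (\<Sum>v\<in>R. if i \<in> set (nb v) then 1 / real c else 0)"
    unfolding flip_prob_eq
  proof (intro sum_mono)
    fix v assume v: "v \<in> R"
    show "(if i = flip_target x v then flip_weight x v else 0) \<le> (if i \<in> set (nb v) then 1 / real c else 0)"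
    proof (cases "i = flip_target x v \<and> flip_weight x v \<noteq> 0")
      case True
      then show ?thesis
        using flip_target_mem[OF v] flip_weight_le[of x v] by auto
    qed (use flip_weight_nonneg in auto)
  qed
  also have "\<dots> = real (card {v\<in>R. i \<in> set (nb v)}) / real c"
    using finite_R by (simp add: sum.If_cases Int_def)
  also have "\<dots> = 1"
    using left_degree[OF assms] c_pos by simp
  finally show "flip_prob R nb C0 c d0 x i \<le> 1" .
qed

lemma sum_error_prob_after_flip:
  "(\<Sum>i<n. if x i \<noteq> y i then 1 - flip_prob R nb C0 c d0 x i else flip_prob R nb C0 c d0 x i)
     = real (nerr x) + (\<Sum>v\<in>R. error_change x v)"
proof -
  let ?p = "flip_prob R nb C0 c d0 x"
  let ?sg = "\<lambda>i. if i \<in> errs x then - 1 else (1 :: real)"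
  have "(\<Sum>i<n. if x i \<noteq> y i then 1 - ?p i else ?p i) =
      (\<Sum>i<n. of_bool (i \<in> errs x)) + (\<Sum>i<n. ?sg i * ?p i)"
    unfolding sum.distrib[symmetric] by (intro sum.cong refl) (auto simp: errs_def)
  also have "(\<Sum>i<n. of_bool (i \<in> errs x) :: real) = real (nerr x)"
  proof -
    have "{..<n} \<inter> {i. i \<in> errs x} = errs x"
      by (auto simp: errs_def)
    then show ?thesis
      by (simp add: nerr_eq_card)
  qed
  also have "(\<Sum>i<n. ?sg i * ?p i) =
      (\<Sum>v\<in>R. \<Sum>i<n. ?sg i * (if i = flip_target x v then flip_weight x v else 0))"
    unfolding flip_prob_eq sum_distrib_left by (rule sum.swap)
  also have "\<dots> = (\<Sum>v\<in>R. error_change x v)"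
  proof (intro sum.cong refl)
    fix v assume v: "v \<in> R"
    have "(\<Sum>i<n. ?sg i * (if i = flip_target x v then flip_weight x v else 0)) =
        (\<Sum>i<n. if i = flip_target x v then ?sg i * flip_weight x v else 0)"
      by (intro sum.cong refl) auto
    also have "\<dots> = (if flip_target x v < n then ?sg (flip_target x v) * flip_weight x v else 0)"
      by (simp add: sum.delta')
    also have "\<dots> = error_change x v"
      using flip_target_mem[OF v, of x] neighbours[OF v] by (auto simp: error_change_def)
    finally show "(\<Sum>i<n. ?sg i * (if i = flip_target x v then flip_weight x v else 0)) =
        error_change x v" .
  qed
  finally show ?thesis .
qed

lemma sum_flip_variance_le:
  "(\<Sum>i<n. flip_prob R nb C0 c d0 x i * (1 - flip_prob R nb C0 c d0 x i)) \<le> real (nerr x)"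
proof -
  let ?p = "flip_prob R nb C0 c d0 x"
  have "(\<Sum>i<n. ?p i * (1 - ?p i)) \<le> (\<Sum>i<n. ?p i)"
    using flip_prob_bounds by (intro sum_mono) (simp add: mult_left_le)
  also have "\<dots> = (\<Sum>v\<in>R. \<Sum>i<n. if i = flip_target x v then flip_weight x v else 0)"
    unfolding flip_prob_eq by (rule sum.swap)
  also have "\<dots> \<le> (\<Sum>v\<in>R. flip_weight x v)"
    by (intro sum_mono) (auto simp: sum.delta' flip_weight_nonneg)
  also have "\<dots> \<le> (\<Sum>v\<in>R. real (local_errs x v) / real c)"
    by (intro sum_mono flip_weight_le_local_errs)
  also have "\<dots> = real (nerr x)"
    using sum_local_errs[of x] c_pos by (simp add: sum_divide_distrib[symmetric] flip: of_nat_sum)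
  finally show ?thesis .
qed

lemma expectation_nerr_rand_flip:
  assumes "real (nerr x) \<le> \<alpha> * real n"
  shows "measure_pmf.expectation (rand_flip n R nb C0 c d0 x) (\<lambda>z. real (nerr z))
    \<le> (1 - \<beta>) * real (nerr x)"
  using hdist_n_random_flip_moments(1)[OF flip_prob_bounds] sum_error_prob_after_flip sum_error_change_le[OF assms]
  by (simp add: rand_flip_def algebra_simps)

lemma variance_nerr_rand_flip:
  "measure_pmf.variance (rand_flip n R nb C0 c d0 x) (\<lambda>z. real (nerr z)) \<le> real (nerr x)"
  using hdist_n_random_flip_moments(2)[OF flip_prob_bounds] sum_flip_variance_le
  by (simp add: rand_flip_def)

lemma card_unsat_le: "real (card (unsat R nb C0 x)) \<le> real c * real (nerr x)"
proof -
  have "unsat R nb C0 x \<subseteq> {v\<in>R. 0 < local_errs x v}"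
  proof
    fix v assume v: "v \<in> unsat R nb C0 x"
    then have "v \<in> R" "map x (nb v) \<notin> C0"
      by (auto simp: unsat_def)
    then show "v \<in> {v\<in>R. 0 < local_errs x v}"
      using local_word_eq_if_no_local_errs local_codeword by (fastforce simp: Suc_le_eq)
  qed
  then have "card (unsat R nb C0 x) \<le> card {v\<in>R. 0 < local_errs x v}"
    using finite_R by (intro card_mono) auto
  also have "real (card {v\<in>R. 0 < local_errs x v}) \<le> (\<Sum>v\<in>{v\<in>R. 0 < local_errs x v}. real (local_errs x v))"
    using sum_mono[of "{v\<in>R. 0 < local_errs x v}" "\<lambda>_. 1 :: real" "\<lambda>v. real (local_errs x v)"]
    by simp
  finally show ?thesis
    by (simp add: sum_local_errs_touched)
qed

lemma nerr_pos_if_unsat: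
  assumes "unsat R nb C0 x \<noteq> {}"
  shows "1 \<le> nerr x"
proof -
  have "card (unsat R nb C0 x) \<noteq> 0"
    using assms finite_R by (simp add: unsat_def)
  then show ?thesis
    using card_unsat_le[of x] by (cases "nerr x") auto
qed

lemma round_cost_le:
  assumes "unsat R nb C0 x \<noteq> {}"
  shows "real (card (unsat R nb C0 x)) + 1 \<le> (real c + 1) * real (nerr x)"
  using card_unsat_le[of x] nerr_pos_if_unsat[OF assms] by (simp add: algebra_simps)

lemma nerr_eq_0_if_satisfied:
  assumes "real (nerr x) \<le> \<alpha> * real n" and "unsat R nb C0 x = {}"
  shows "nerr x = 0"
proof -
  have "error_change x v = 0" if "v \<in> R" for v
    using assms(2) that by (auto simp: unsat_def error_change_def flip_weight_eq_0)
  then have "0 \<le> - \<beta> * real (nerr x)"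
    using sum_error_change_le[OF assms(1)] by simp
  then show ?thesis
    using beta_pos by (simp add: mult_le_0_iff)
qed

section \<open>A supermartingale bounding the failure probability\<close>

definition horizon :: real where "horizon = real n + \<gamma> * \<alpha> * real n"

definition penalty :: "(nat \<Rightarrow> bool) \<Rightarrow> nat \<Rightarrow> real" where
  "penalty x k = ((max (real k + \<gamma> * real (nerr x) - horizon) 0)\<^sup>2 + \<mu> * real (nerr x)) / (real n)\<^sup>2"

definition potential :: "(nat \<Rightarrow> bool) \<times> nat \<Rightarrow> real" where
  "potential s = (case s of (x, k) \<Rightarrow>
     if \<alpha> * real n < real (nerr x) then 1 else min 1 (penalty x k))"

abbreviation success :: "((nat \<Rightarrow> bool) \<times> nat) set" where
  "success \<equiv> {(z, k). (\<forall>i<n. z i = y i) \<and> unsat R nb C0 z = {} \<and> k \<le> K * n}"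

lemma penalty_nonneg: "0 \<le> penalty x k"
  using mu_nonneg by (simp add: penalty_def)

lemma potential_nonneg: "0 \<le> potential s"
  using penalty_nonneg by (simp add: potential_def split: prod.split)

lemma potential_le_1: "potential s \<le> 1"
  by (simp add: potential_def split: prod.split)

lemma expectation_penalty_le:
  fixes D :: "(nat \<Rightarrow> bool) pmf"
  assumes "finite (set_pmf D)"
  defines "a \<equiv> measure_pmf.expectation D (\<lambda>z. real (nerr z))"
  shows "measure_pmf.expectation D (\<lambda>z. penalty z k) \<le>
    ((max (real k + \<gamma> * a - horizon) 0)\<^sup>2
      + \<gamma>\<^sup>2 * measure_pmf.variance D (\<lambda>z. real (nerr z)) + \<mu> * a) / (real n)\<^sup>2"
proof -
  let ?E = "measure_pmf.expectation D"
  have int: "integrable (measure_pmf D) f" for f :: "(nat \<Rightarrow> bool) \<Rightarrow> real"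
    using assms(1) by (rule integrable_measure_pmf_finite)
  have "penalty z k = ((max (real k + \<gamma> * a + \<gamma> * (real (nerr z) - a) - horizon) 0)\<^sup>2
      + \<mu> * real (nerr z)) / (real n)\<^sup>2" for z
    by (simp add: penalty_def algebra_simps)
  then have "?E (\<lambda>z. penalty z k) = (?E (\<lambda>z. (max (real k + \<gamma> * a + \<gamma> * (real (nerr z) - a)
      - horizon) 0)\<^sup>2) + \<mu> * a) / (real n)\<^sup>2"
    by (simp add: int a_def Bochner_Integration.integral_add)
  also have "\<dots> \<le> ((max (real k + \<gamma> * a - horizon) 0)\<^sup>2
      + \<gamma>\<^sup>2 * measure_pmf.variance D (\<lambda>z. real (nerr z)) + \<mu> * a) / (real n)\<^sup>2"
    using expectation_pos_part_sq_le[OF assms(1), of "real k + \<gamma> * a" \<gamma> "\<lambda>z. real (nerr z)" horizon]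
    by (intro divide_right_mono) (simp_all add: a_def)
  finally show ?thesis .
qed

text \<open>This identity is what determines \<open>\<mu>\<close>: the drift \<open>\<beta> \<mu> m\<close> of the term \<open>\<mu> m\<close> pays for the
  variance created by the square and for the Chebyshev term below.\<close>
lemma penalty_absorbs_variance:
  "penalty x k = ((max (real k + \<gamma> * real (nerr x) - horizon) 0)\<^sup>2 + \<gamma>\<^sup>2 * real (nerr x)
      + \<mu> * ((1 - \<beta>) * real (nerr x))) / (real n)\<^sup>2 + real (nerr x) / (\<beta> * \<alpha> * real n)\<^sup>2"
proof -
  let ?m = "real (nerr x)"
  have "\<mu> * ((1 - \<beta>) * ?m) = \<mu> * ?m - (\<mu> * \<beta>) * ?m"
    by (simp add: algebra_simps)
  also have "\<dots> = \<mu> * ?m - \<gamma>\<^sup>2 * ?m - ?m / (\<beta>\<^sup>2 * \<alpha>\<^sup>2)"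
    unfolding mu_beta by (simp add: algebra_simps)
  finally have "\<mu> * ((1 - \<beta>) * ?m) = \<mu> * ?m - \<gamma>\<^sup>2 * ?m - ?m / (\<beta>\<^sup>2 * \<alpha>\<^sup>2)" .
  moreover have "?m / (\<beta> * \<alpha> * real n)\<^sup>2 = ?m / (\<beta>\<^sup>2 * \<alpha>\<^sup>2) / (real n)\<^sup>2"
    by (simp add: power_mult_distrib)
  ultimately show ?thesis
    by (simp add: penalty_def add_divide_distrib diff_divide_distrib)
qed

text \<open>Chebyshev's inequality in disguise: leaving the ball around \<open>y\<close> needs a deviation of at
  least \<open>\<beta> \<alpha> n\<close> from the expected number of errors.\<close>
lemma potential_le_penalty_plus_deviation:
  assumes n: "n > 0" and a: "a \<le> (1 - \<beta>) * \<alpha> * real n"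
  shows "potential (z, k) \<le> penalty z k + (real (nerr z) - a)\<^sup>2 / (\<beta> * \<alpha> * real n)\<^sup>2"
proof (cases "\<alpha> * real n < real (nerr z)")
  case True
  have pos: "0 < \<beta> * \<alpha> * real n"
    using beta_pos alpha_pos n by simp
  have "\<beta> * \<alpha> * real n \<le> real (nerr z) - a"
    using True a by (simp add: algebra_simps)
  then have "(\<beta> * \<alpha> * real n)\<^sup>2 \<le> (real (nerr z) - a)\<^sup>2"
    using pos by (intro power_mono) auto
  then have "1 \<le> (real (nerr z) - a)\<^sup>2 / (\<beta> * \<alpha> * real n)\<^sup>2"
    using pos beta_pos alpha_pos n by (simp add: le_divide_eq)
  then show ?thesis
    using True penalty_nonneg[of z k] by (simp add: potential_def)
next
  case False
  have "0 \<le> (real (nerr z) - a)\<^sup>2 / (\<beta> * \<alpha> * real n)\<^sup>2"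
    by simp
  then show ?thesis
    using False by (simp add: potential_def min_le_iff_disj)
qed

lemma expectation_potential_le:
  fixes D :: "(nat \<Rightarrow> bool) pmf"
  assumes fin: "finite (set_pmf D)" and n: "n > 0"
  defines "a \<equiv> measure_pmf.expectation D (\<lambda>z. real (nerr z))"
    and "v \<equiv> measure_pmf.variance D (\<lambda>z. real (nerr z))"
  assumes a: "a \<le> (1 - \<beta>) * \<alpha> * real n"
  shows "measure_pmf.expectation D (\<lambda>z. potential (z, k)) \<le>
    ((max (real k + \<gamma> * a - horizon) 0)\<^sup>2 + \<gamma>\<^sup>2 * v + \<mu> * a) / (real n)\<^sup>2
      + v / (\<beta> * \<alpha> * real n)\<^sup>2"
proof -
  let ?E = "measure_pmf.expectation D"
  have int: "integrable (measure_pmf D) f" for f :: "(nat \<Rightarrow> bool) \<Rightarrow> real"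
    using fin by (rule integrable_measure_pmf_finite)
  have "?E (\<lambda>z. potential (z, k)) \<le>
      ?E (\<lambda>z. penalty z k + (real (nerr z) - a)\<^sup>2 / (\<beta> * \<alpha> * real n)\<^sup>2)"
    using potential_le_penalty_plus_deviation[OF n a] by (intro integral_mono int)
  also have "\<dots> = ?E (\<lambda>z. penalty z k) + v / (\<beta> * \<alpha> * real n)\<^sup>2"
    by (simp add: int v_def a_def Bochner_Integration.integral_add)
  also have "\<dots> \<le> ((max (real k + \<gamma> * a - horizon) 0)\<^sup>2 + \<gamma>\<^sup>2 * v + \<mu> * a) / (real n)\<^sup>2
      + v / (\<beta> * \<alpha> * real n)\<^sup>2"
    using expectation_penalty_le[OF fin, of k] by (simp add: a_def v_def)
  finally show ?thesis .
qed

lemma expectation_potential_rand_flip_le: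
  assumes n: "n > 0" and ball: "real (nerr x) \<le> \<alpha> * real n" and U: "unsat R nb C0 x \<noteq> {}"
  shows "measure_pmf.expectation (rand_flip n R nb C0 c d0 x)
      (\<lambda>z. potential (z, k + card (unsat R nb C0 x) + 1)) \<le> penalty x k"
proof -
  let ?D = "rand_flip n R nb C0 c d0 x"
  define k' where "k' = k + card (unsat R nb C0 x) + 1"
  define m where "m = real (nerr x)"
  define a where "a = measure_pmf.expectation ?D (\<lambda>z. real (nerr z))"
  define v where "v = measure_pmf.variance ?D (\<lambda>z. real (nerr z))"
  have a_le: "a \<le> (1 - \<beta>) * m"
    unfolding a_def m_def by (rule expectation_nerr_rand_flip[OF ball])
  have v_le: "v \<le> m"
    unfolding v_def m_def by (rule variance_nerr_rand_flip)
  have "(1 - \<beta>) * m \<le> (1 - \<beta>) * (\<alpha> * real n)"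
    using ball beta_le_1 unfolding m_def by (intro mult_left_mono) auto
  then have a_ball: "a \<le> (1 - \<beta>) * \<alpha> * real n"
    using a_le by simp
  have "real (card (unsat R nb C0 x)) + 1 \<le> (real c + 1) * m"
    unfolding m_def by (rule round_cost_le[OF U])
  moreover have "\<gamma> * a \<le> \<gamma> * ((1 - \<beta>) * m)"
    using a_le gamma_pos by simp
  ultimately have time: "real k' + \<gamma> * a \<le> real k + \<gamma> * m"
    using gamma_beta by (simp add: k'_def algebra_simps)
  have "measure_pmf.expectation ?D (\<lambda>z. potential (z, k')) \<le>
      ((max (real k' + \<gamma> * a - horizon) 0)\<^sup>2 + \<gamma>\<^sup>2 * v + \<mu> * a) / (real n)\<^sup>2
      + v / (\<beta> * \<alpha> * real n)\<^sup>2"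
    using expectation_potential_le[OF finite_set_rand_flip n a_ball[unfolded a_def]]
    by (simp add: a_def v_def)
  also have "\<dots> \<le> ((max (real k + \<gamma> * m - horizon) 0)\<^sup>2 + \<gamma>\<^sup>2 * m + \<mu> * ((1 - \<beta>) * m))
      / (real n)\<^sup>2 + m / (\<beta> * \<alpha> * real n)\<^sup>2"
  proof -
    have "(max (real k' + \<gamma> * a - horizon) 0)\<^sup>2 \<le> (max (real k + \<gamma> * m - horizon) 0)\<^sup>2"
      using time by (intro power_mono) auto
    moreover have "\<gamma>\<^sup>2 * v \<le> \<gamma>\<^sup>2 * m" "\<mu> * a \<le> \<mu> * ((1 - \<beta>) * m)"
      using v_le a_le mu_nonneg by (simp_all add: mult_left_mono)
    ultimately show ?thesis
      using v_le by (intro add_mono divide_right_mono) auto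
  qed
  also have "\<dots> = penalty x k"
    unfolding m_def by (rule penalty_absorbs_variance[symmetric])
  finally show ?thesis
    by (simp add: k'_def)
qed

lemma potential_step:
  assumes n: "n > 0"
  shows "(\<integral>\<^sup>+s'. ennreal (potential s') \<partial>rd_step n R nb C0 c d0 s) \<le> ennreal (potential s)"
proof (cases s)
  case (Pair x k)
  show ?thesis
  proof (cases "unsat R nb C0 x = {}")
    case True
    then show ?thesis
      by (simp add: Pair rd_step_def)
  next
    case U: False
    show ?thesis
    proof (cases "\<alpha> * real n < real (nerr x)")
      case True
      have "(\<integral>\<^sup>+s'. ennreal (potential s') \<partial>rd_step n R nb C0 c d0 s) \<le> (\<integral>\<^sup>+s'. 1 \<partial>rd_step n R nb C0 c d0 s)"
        by (intro nn_integral_mono) (simp add: potential_le_1)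
      then show ?thesis
        using True by (simp add: Pair potential_def)
    next
      case False
      let ?k' = "k + card (unsat R nb C0 x) + 1"
      have "(\<integral>\<^sup>+s'. ennreal (potential s') \<partial>rd_step n R nb C0 c d0 s) =
          (\<integral>\<^sup>+z. ennreal (potential (z, ?k')) \<partial>rand_flip n R nb C0 c d0 x)"
        using U by (simp add: Pair rd_step_def)
      also have "\<dots> = ennreal (measure_pmf.expectation (rand_flip n R nb C0 c d0 x) (\<lambda>z. potential (z, ?k')))"
        by (intro nn_integral_eq_integral integrable_measure_pmf_finite finite_set_rand_flip)
          (simp_all add: potential_nonneg)
      also have "\<dots> \<le> ennreal (potential s)"
      proof (intro ennreal_leI)
        let ?E = "measure_pmf.expectation (rand_flip n R nb C0 c d0 x)"
        have "?E (\<lambda>z. potential (z, ?k')) \<le> ?E (\<lambda>_. 1)"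
          by (intro integral_mono integrable_measure_pmf_finite finite_set_rand_flip)
            (simp_all add: potential_le_1)
        moreover have "?E (\<lambda>z. potential (z, ?k')) \<le> penalty x k"
          using False by (intro expectation_potential_rand_flip_le[OF n _ U]) simp
        ultimately show "?E (\<lambda>z. potential (z, ?k')) \<le> potential s"
          using False by (simp add: Pair potential_def)
      qed
      finally show ?thesis .
    qed
  qed
qed

lemma potential_run:
  assumes "n > 0"
  shows "(\<integral>\<^sup>+s. ennreal (potential s) \<partial>rand_decode_run n R nb C0 c d0 N x) \<le> ennreal (potential (x, n))"
proof -
  have "(\<integral>\<^sup>+s. ennreal (potential s) \<partial>rand_decode_run n R nb C0 c d0 N x) \<le>
      (\<integral>\<^sup>+s. ennreal (potential s) \<partial>return_pmf (x, n))"
    unfolding rand_decode_run_def by (rule nn_integral_funpow_bind_pmf_le) (rule potential_step[OF assms])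
  then show ?thesis
    by simp
qed

lemma potential_initial:
  assumes n: "n > 0" and ball: "real (nerr x) \<le> \<alpha> * real n"
  shows "potential (x, n) \<le> \<mu> * \<alpha> / real n"
proof -
  have "real n + \<gamma> * real (nerr x) \<le> horizon"
    using ball gamma_pos by (simp add: horizon_def mult.assoc mult_left_mono)
  then have "penalty x n = \<mu> * real (nerr x) / (real n)\<^sup>2"
    by (simp add: penalty_def)
  also have "\<dots> \<le> \<mu> * (\<alpha> * real n) / (real n)\<^sup>2"
    using ball mu_nonneg by (intro divide_right_mono mult_left_mono) auto
  also have "\<dots> = \<mu> * \<alpha> / real n"
    using n by (simp add: power2_eq_square)
  finally show ?thesis
    using ball by (simp add: potential_def)
qed

lemma one_le_penalty_if_late:
  assumes n: "n > 0" and late: "horizon + real n \<le> real k"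
  shows "1 \<le> penalty z k"
proof -
  have "0 \<le> \<gamma> * real (nerr z)"
    using gamma_pos by simp
  then have "real n \<le> real k + \<gamma> * real (nerr z) - horizon"
    using late by linarith
  then have "(real n)\<^sup>2 \<le> (max (real k + \<gamma> * real (nerr z) - horizon) 0)\<^sup>2"
    by (intro power_mono) auto
  moreover have "0 \<le> \<mu> * real (nerr z)"
    using mu_nonneg by simp
  ultimately have "(real n)\<^sup>2 \<le> (max (real k + \<gamma> * real (nerr z) - horizon) 0)\<^sup>2 + \<mu> * real (nerr z)"
    by linarith
  then show ?thesis
    using n by (simp add: penalty_def le_divide_eq)
qed

lemma potential_eq_1_if_failed:
  assumes n: "n > 0" and s: "s \<in> set_pmf (rand_decode_run n R nb C0 c d0 (K * n) x)"
    and fail: "s \<notin> success"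
  shows "potential s = 1"
proof -
  obtain z k where s_eq: "s = (z, k)"
    by (cases s)
  show ?thesis
  proof (cases "\<alpha> * real n < real (nerr z)")
    case False
    have "K * n < k"
    proof (cases "unsat R nb C0 z = {}")
      case True
      then have "nerr z = 0"
        using nerr_eq_0_if_satisfied False by simp
      then have "\<forall>i<n. z i = y i"
        using finite_errs[of z] by (auto simp: nerr_eq_card errs_def)
      then show ?thesis
        using fail True by (auto simp: s_eq)
    next
      case False
      then show ?thesis
        using rand_decode_run_time[OF finite_R s] n by (simp add: s_eq)
    qed
    then have "real (K * n) < real k"
      by (simp only: of_nat_less_iff)
    moreover have "horizon + real n \<le> real (K * n)"
      using K_mult_ge[of n] by (simp add: horizon_def algebra_simps)
    ultimately have "1 \<le> penalty z k"
      by (intro one_le_penalty_if_late[OF n]) simp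
    then show ?thesis
      using False by (simp add: s_eq potential_def)
  qed (simp add: s_eq potential_def)
qed

lemma success_probability:
  assumes ball: "real (nerr x) \<le> \<alpha> * real n"
  shows "measure_pmf.prob (rand_decode_run n R nb C0 c d0 (K * n) x) success \<ge> 1 - \<mu> * \<alpha> / real n"
proof (cases "n = 0")
  case True
  then have "unsat R nb C0 x = {}"
    using R_empty_if_n_0 by (simp add: unsat_def)
  then show ?thesis
    using True by (simp add: rand_decode_run_halted measure_return)
next
  case False
  then have n: "n > 0"
    by simp
  let ?P = "rand_decode_run n R nb C0 c d0 (K * n) x"
  have "emeasure ?P (UNIV - success) = (\<integral>\<^sup>+s. indicator (UNIV - success) s \<partial>?P)"
    by simp
  also have "\<dots> \<le> (\<integral>\<^sup>+s. ennreal (potential s) \<partial>?P)"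
    using potential_eq_1_if_failed[OF n]
    by (intro nn_integral_mono_AE) (auto simp: AE_measure_pmf_iff split: split_indicator)
  also have "\<dots> \<le> ennreal (potential (x, n))"
    by (rule potential_run[OF n])
  also have "\<dots> \<le> ennreal (\<mu> * \<alpha> / real n)"
    using potential_initial[OF n ball] by (rule ennreal_leI)
  finally have "measure_pmf.prob ?P (UNIV - success) \<le> \<mu> * \<alpha> / real n"
    using mu_nonneg alpha_pos by (simp add: measure_pmf.emeasure_eq_measure)
  then show ?thesis
    using measure_pmf.prob_compl[of success ?P] by simp
qed

end

theorem theorem3p6:
  fixes c d d0 :: nat and \<alpha> \<delta> :: real and C0 :: "bool list set"
  assumes "c > 0" "d > 0"
    and "0 < \<alpha>" "\<alpha> \<le> 1" "0 < \<delta>" "\<delta> \<le> 1"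
    and "linear_code d C0" "min_distance C0 d0"
    and "real d0 * \<delta> > 2"
  shows "\<exists>K::nat. \<exists>\<epsilon>::nat \<Rightarrow> real. \<epsilon> \<longlonglongrightarrow> 0 \<and>
    (\<forall>n R nb x y.
       bip_expander n R nb c d \<alpha> \<delta> \<and> y \<in> tanner R nb C0 \<and>
       real (hdist_n n x y) \<le> \<alpha> * real n \<longrightarrow>
       measure_pmf.prob (rand_decode_run n R nb C0 c d0 (K * n) x)
         {(z, k). (\<forall>i<n. z i = y i) \<and> unsat R nb C0 z = {} \<and> k \<le> K * n}
       \<ge> 1 - \<epsilon> n)"
proof -
  interpret decoding_params c d d0 C0 \<alpha> \<delta>
    using assms by unfold_locales auto
  have "measure_pmf.prob (rand_decode_run n R nb C0 c d0 (K * n) x)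
      {(z, k). (\<forall>i<n. z i = y i) \<and> unsat R nb C0 z = {} \<and> k \<le> K * n} \<ge> 1 - \<mu> * \<alpha> / real n"
    if "bip_expander n R nb c d \<alpha> \<delta>" "y \<in> tanner R nb C0" "real (hdist_n n x y) \<le> \<alpha> * real n"
    for n R nb x y
  proof -
    interpret tanner_instance c d d0 C0 \<alpha> \<delta> n R nb y
      using that(1,2) by unfold_locales
    show ?thesis
      using success_probability[OF that(3)] .
  qed
  moreover have "(\<lambda>n. \<mu> * \<alpha> / real n) \<longlonglongrightarrow> 0"
    by (rule lim_const_over_n)
  ultimately show ?thesis
    by blast
qed

end
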